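(* Let $p$ be a prime, let $m,n$ be positive integers, let $V_m$ and $V_n$ be $\mathbb{F}_p$-vector spaces of dimensions $m$ and $n$, each equipped with a nondegenerate inner product $\langle\cdot,\cdot\rangle$. Let $f:V_m\to\mathbb{F}_p$ and $g:V_n\to\mathbb{F}_p$ be bent functions and let $h:V_m\to V_n$ be any function. Define $F:V_m\times V_n\to\mathbb{F}_p$ by \[F(x,y)=f(x)+g(y+h(x)).\] Then $F$ is bent if and only if for every $b\in V_n$ the function $G_b:V_m\to\mathbb{F}_p$, $G_b(x)=f(x)+\langle b,h(x)\rangle$, is bent. In that case the dual of $F$ is \[F^*(x,y)=G_y^*(x)+g^*(y),\] where $G_y^*$ and $g^*$ denote the duals of $G_y$ and $g$.
   Context: For $f:V_n\to\mathbb{F}_p$, the Walsh transform is $\widehat f(b)=\sum_{x\in V_n}\epsilon_p^{f(x)-\langle b,x\rangle}$ with $\epsilon_p=e^{2\pi i/p}$; on $V_m\times V_n$ the inner product is $\langle (a,b),(x,y)\rangle=\langle a,x\rangle+\langle b,y\rangle$. $f$ is bent if $|\widehat f(b)|=p^{n/2}$ for all $b$. For a bent $f$ there is a unique function $f^*:V_n\to\mathbb{F}_p$ (the dual) with $\widehat f(b)=\zeta_b\,p^{n/2}\epsilon_p^{f^*(b)}$ for some $\zeta_b\in\{\pm1,\pm i\}$ (for $p=2$: $\widehat f(b)=(-1)^{f^*(b)}2^{n/2}$; for odd $p$: $\zeta_b\in\{\pm1\}$ if $p^n\equiv1\pmod 4$ and $\zeta_b\in\{\pm i\}$ if $p^n\equiv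 3\pmod 4$). *)

theory Defs
  imports Complex_Main "Berlekamp_Zassenhaus.Finite_Field"
begin

text \<open>The prime field F_p is the type 'p mod_ring with CARD('p) = p prime (class prime_card).
  A vector space V over F_p is modelled as a finite abelian group type 'v; an inner product is a
  symmetric, biadditive (hence F_p-bilinear), nondegenerate form ip :: 'v => 'v => 'p mod_ring.
  (Nondegeneracy forces p x = 0, so 'v is an F_p-vector space; its dimension n is fixed by
  CARD('v) = p ^ n.)\<close>

definition eps :: "'p::prime_card mod_ring \<Rightarrow> complex" where
  "eps a = exp (2 * pi * \<i> * of_int (to_int_mod_ring a) / of_nat CARD('p))"

definition inner_prod :: "('v::ab_group_add \<Rightarrow> 'v \<Rightarrow> 'p::prime_card mod_ring) \<Rightarrow> bool" where
  "inner_prod ip \<longleftrightarrow>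
     (\<forall>x x' y. ip (x + x') y = ip x y + ip x' y) \<and>
     (\<forall>x y y'. ip x (y + y') = ip x y + ip x y') \<and>
     (\<forall>x y. ip x y = ip y x) \<and>
     (\<forall>x. (\<forall>y. ip x y = 0) \<longrightarrow> x = 0)"

definition walsh :: "('v::finite \<Rightarrow> 'v \<Rightarrow> 'p::prime_card mod_ring) \<Rightarrow> ('v \<Rightarrow> 'p mod_ring) \<Rightarrow> 'v \<Rightarrow> complex" where
  "walsh ip f b = (\<Sum>x\<in>UNIV. eps (f x - ip b x))"

definition bent :: "('v::finite \<Rightarrow> 'v \<Rightarrow> 'p::prime_card mod_ring) \<Rightarrow> nat \<Rightarrow> ('v \<Rightarrow> 'p mod_ring) \<Rightarrow> bool" where
  "bent ip n f \<longleftrightarrow> (\<forall>b. cmod (walsh ip f b) = sqrt (real CARD('p)) ^ n)"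

definition zeta_set :: "nat \<Rightarrow> nat \<Rightarrow> complex set" where
  "zeta_set p n = (if p = 2 then {1}
                   else if p ^ n mod 4 = 1 then {1, -1} else {\<i>, -\<i>})"

definition is_dual :: "('v::finite \<Rightarrow> 'v \<Rightarrow> 'p::prime_card mod_ring) \<Rightarrow> nat \<Rightarrow> ('v \<Rightarrow> 'p mod_ring) \<Rightarrow> ('v \<Rightarrow> 'p mod_ring) \<Rightarrow> bool" where
  "is_dual ip n f fs \<longleftrightarrow>
     (\<forall>b. \<exists>\<zeta>\<in>zeta_set CARD('p) n. walsh ip f b = \<zeta> * complex_of_real (sqrt (real CARD('p)) ^ n) * eps (fs b))"

definition prod_ip :: "('a \<Rightarrow> 'a \<Rightarrow> 'p::prime_card mod_ring) \<Rightarrow> ('b \<Rightarrow> 'b \<Rightarrow> 'p mod_ring) \<Rightarrow> 'a \<times> 'b \<Rightarrow> 'a \<times> 'b \<Rightarrow> 'p mod_ring" where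
  "prod_ip ipm ipn u v = ipm (fst u) (fst v) + ipn (snd u) (snd v)"

end

theory Submission
  imports Defs
begin

text \<open>Substituting z = y + h(x) in the Walsh sum of F at (a, b) turns the inner character
  into eps(-<b, z>) eps(<b, h x>), so the double sum splits as the product of the Walsh
  transform of G_b at a and that of g at b. Since g is bent, the second factor has modulus
  p^(n/2); hence F is bent iff every G_b is, and multiplying the dual representations of the
  two factors gives that of F, the product of admissible signs being admissible.\<close>

lemma eps_add: "eps (a + b) = eps a * eps b"
proof -
  let ?p = "int CARD('a)" and ?t = to_int_mod_ring
  define k where "k = (?t a + ?t b) div ?p"
  have t: "?t (a + b) = ?t a + ?t b - k * ?p"
    unfolding k_def to_int_mod_ring_add by (simp add: minus_div_mult_eq_mod[symmetric])
  have "eps (a + b) = exp (2 * pi * \<i> * of_int (?t a) / of_nat CARD('a)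
       + 2 * pi * \<i> * of_int (?t b) / of_nat CARD('a) - 2 * pi * \<i> * of_int k)"
    unfolding eps_def t by (simp add: field_simps)
  also have "\<dots> = eps a * eps b / exp (2 * pi * \<i> * of_int k)"
    unfolding eps_def by (simp add: exp_add exp_diff)
  also have "exp (2 * pi * \<i> * of_int k) = cis (2 * pi * of_int k)"
    by (simp add: cis_conv_exp mult_ac)
  also have "\<dots> = 1"
    by (simp add: cis.ctr cos_int_2pin sin_int_2pin complex_eq_iff)
  finally show ?thesis by simp
qed

lemma odd_mod_4: "odd (x::nat) \<Longrightarrow> x mod 4 \<in> {1, 3}"
  by (simp, presburger)

lemma fourth_roots_mult:
  fixes z1 z2 :: complex and r s :: nat
  assumes "r \<in> {1, 3}" "s \<in> {1, 3}"
    and "z1 \<in> (if r = 1 then {1, -1} else {\<i>, -\<i>})"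
    and "z2 \<in> (if s = 1 then {1, -1} else {\<i>, -\<i>})"
  shows "z1 * z2 \<in> (if r * s mod 4 = 1 then {1, -1} else {\<i>, -\<i>})"
  using assms by (auto split: if_splits)

lemma zeta_set_mult:
  assumes "prime p" and z1: "z1 \<in> zeta_set p m" and z2: "z2 \<in> zeta_set p n"
  shows "z1 * z2 \<in> zeta_set p (m + n)"
proof (cases "p = 2")
  case True
  with z1 z2 show ?thesis by (simp add: zeta_set_def)
next
  case False
  then have "2 < p" using prime_ge_2_nat[OF \<open>prime p\<close>] by linarith
  then have "odd p" using prime_odd_nat[OF \<open>prime p\<close>] by blast
  have zeta: "zeta_set p k = (if p ^ k mod 4 = 1 then {1, -1} else {\<i>, -\<i>})" for k
    using False by (simp add: zeta_set_def)
  have "z1 * z2 \<in> (if (p ^ m mod 4) * (p ^ n mod 4) mod 4 = 1 then {1, -1} else {\<i>, -\<i>})"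
    using \<open>odd p\<close> z1 z2 unfolding zeta by (intro fourth_roots_mult odd_mod_4) simp_all
  then show ?thesis
    unfolding zeta mod_mult_eq power_add .
qed

lemma sum_UNIV_add_right:
  fixes \<phi> :: "'a::group_add \<Rightarrow> 'b::comm_monoid_add"
  shows "(\<Sum>y\<in>UNIV. \<phi> (y + c)) = (\<Sum>z\<in>UNIV. \<phi> z)"
  using bij_plus_right by (rule sum.reindex_bij_betw)

lemma inner_prod_diff_right:
  assumes "inner_prod ip"
  shows "ip x (y - y') = ip x y - ip x y'"
proof -
  have "ip x y = ip x (y - y') + ip x y'"
    using assms unfolding inner_prod_def by (metis diff_add_cancel)
  then show ?thesis by (simp add: algebra_simps)
qed

lemma walsh_shear:
  fixes ipm :: "'vm::{finite,ab_group_add} \<Rightarrow> 'vm \<Rightarrow> 'p::prime_card mod_ring"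
    and ipn :: "'vn::{finite,ab_group_add} \<Rightarrow> 'vn \<Rightarrow> 'p mod_ring"
  assumes "inner_prod ipn"
  shows "walsh (prod_ip ipm ipn) (\<lambda>(x, y). f x + g (y + h x)) (a, b)
       = walsh ipm (\<lambda>x. f x + ipn b (h x)) a * walsh ipn g b"
proof -
  have "walsh (prod_ip ipm ipn) (\<lambda>(x, y). f x + g (y + h x)) (a, b)
      = (\<Sum>x\<in>UNIV. \<Sum>y\<in>UNIV. eps (f x + g (y + h x) - (ipm a x + ipn b y)))"
    unfolding walsh_def prod_ip_def UNIV_Times_UNIV[symmetric] sum.cartesian_product
    by (simp add: case_prod_beta)
  also have "\<dots> = (\<Sum>x\<in>UNIV. \<Sum>z\<in>UNIV. eps (f x + g z - (ipm a x + ipn b (z - h x))))"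
    using sum_UNIV_add_right[of "\<lambda>z. eps (f x + g z - (ipm a x + ipn b (z - h x)))" "h x" for x]
    by simp
  also have "\<dots> = (\<Sum>x\<in>UNIV. \<Sum>z\<in>UNIV. eps (f x + ipn b (h x) - ipm a x) * eps (g z - ipn b z))"
    by (simp add: eps_add[symmetric] inner_prod_diff_right[OF assms] algebra_simps)
  also have "\<dots> = walsh ipm (\<lambda>x. f x + ipn b (h x)) a * walsh ipn g b"
    unfolding walsh_def by (simp add: sum_product)
  finally show ?thesis .
qed

lemma bent_shear_iff:
  fixes ipm :: "'vm::{finite,ab_group_add} \<Rightarrow> 'vm \<Rightarrow> 'p::prime_card mod_ring"
    and ipn :: "'vn::{finite,ab_group_add} \<Rightarrow> 'vn \<Rightarrow> 'p mod_ring"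
  assumes "inner_prod ipn" and "bent ipn n g"
  shows "bent (prod_ip ipm ipn) (m + n) (\<lambda>(x, y). f x + g (y + h x))
     \<longleftrightarrow> (\<forall>b. bent ipm m (\<lambda>x. f x + ipn b (h x)))"
proof -
  let ?s = "sqrt (real CARD('p))"
  have "cmod (walsh ipn g b) = ?s ^ n" for b
    using \<open>bent ipn n g\<close> unfolding bent_def by blast
  then have "bent (prod_ip ipm ipn) (m + n) (\<lambda>(x, y). f x + g (y + h x))
      \<longleftrightarrow> (\<forall>a b. cmod (walsh ipm (\<lambda>x. f x + ipn b (h x)) a) * ?s ^ n = ?s ^ m * ?s ^ n)"
    unfolding bent_def by (simp add: walsh_shear[OF assms(1)] norm_mult power_add)
  then show ?thesis
    unfolding bent_def by auto
qed

lemma is_dual_shear: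
  fixes ipm :: "'vm::{finite,ab_group_add} \<Rightarrow> 'vm \<Rightarrow> 'p::prime_card mod_ring"
    and ipn :: "'vn::{finite,ab_group_add} \<Rightarrow> 'vn \<Rightarrow> 'p mod_ring"
  assumes "inner_prod ipn"
    and Gs: "\<And>b. is_dual ipm m (\<lambda>x. f x + ipn b (h x)) (Gs b)" and gs: "is_dual ipn n g gs"
  shows "is_dual (prod_ip ipm ipn) (m + n) (\<lambda>(x, y). f x + g (y + h x)) (\<lambda>(x, y). Gs y x + gs y)"
  unfolding is_dual_def
proof (intro allI)
  fix ab :: "'vm \<times> 'vn"
  obtain a b where ab: "ab = (a, b)" by fastforce
  let ?s = "complex_of_real (sqrt (real CARD('p)))"
  obtain z1 where z1: "z1 \<in> zeta_set CARD('p) m"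
    and w1: "walsh ipm (\<lambda>x. f x + ipn b (h x)) a = z1 * ?s ^ m * eps (Gs b a)"
    using Gs unfolding is_dual_def by auto
  obtain z2 where z2: "z2 \<in> zeta_set CARD('p) n"
    and w2: "walsh ipn g b = z2 * ?s ^ n * eps (gs b)"
    using gs unfolding is_dual_def by auto
  have "walsh (prod_ip ipm ipn) (\<lambda>(x, y). f x + g (y + h x)) ab
      = (z1 * z2) * ?s ^ (m + n) * eps (Gs b a + gs b)"
    unfolding ab walsh_shear[OF assms(1)] w1 w2 eps_add power_add by (simp only: mult_ac)
  with zeta_set_mult[OF prime_card z1 z2] ab
  show "\<exists>\<zeta>\<in>zeta_set CARD('p) (m + n). walsh (prod_ip ipm ipn) (\<lambda>(x, y). f x + g (y + h x)) ab
      = \<zeta> * complex_of_real (sqrt (real CARD('p)) ^ (m + n)) * eps ((\<lambda>(x, y). Gs y x + gs y) ab)"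
    by auto
qed

theorem theorem1:
  fixes ipm :: "'vm::{finite,ab_group_add} \<Rightarrow> 'vm \<Rightarrow> 'p::prime_card mod_ring"
    and ipn :: "'vn::{finite,ab_group_add} \<Rightarrow> 'vn \<Rightarrow> 'p mod_ring"
    and f :: "'vm \<Rightarrow> 'p mod_ring" and g :: "'vn \<Rightarrow> 'p mod_ring"
    and h :: "'vm \<Rightarrow> 'vn" and m n :: nat
  assumes "m > 0" and "n > 0"
    and "CARD('vm) = CARD('p) ^ m" and "CARD('vn) = CARD('p) ^ n"
    and "inner_prod ipm" and "inner_prod ipn"
    and "bent ipm m f" and "bent ipn n g"
  shows "(bent (prod_ip ipm ipn) (m + n) (\<lambda>(x, y). f x + g (y + h x))
            \<longleftrightarrow> (\<forall>b. bent ipm m (\<lambda>x. f x + ipn b (h x))))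
       \<and> (bent (prod_ip ipm ipn) (m + n) (\<lambda>(x, y). f x + g (y + h x)) \<longrightarrow>
            (\<forall>Gs gs. (\<forall>y. is_dual ipm m (\<lambda>x. f x + ipn y (h x)) (Gs y)) \<and> is_dual ipn n g gs \<longrightarrow>
               is_dual (prod_ip ipm ipn) (m + n) (\<lambda>(x, y). f x + g (y + h x))
                 (\<lambda>(x, y). Gs y x + gs y)))"
  using bent_shear_iff[OF \<open>inner_prod ipn\<close> \<open>bent ipn n g\<close>] is_dual_shear[OF \<open>inner_prod ipn\<close>]
  by blast

end
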